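(* There is a constant $C$, depending only on $\Gamma$ and $V$, such that every $(g,a)\in\Gamma$ satisfies $\|a_\perp\|\le C$. Moreover, if $(g,a)\in\Gamma_1$, then $a_\perp=0$.
   Context: $E(n)$ is the Euclidean group, with elements $(g,a)$, $g\in O(n)$, $a\in\mathbb R^n$, acting by $(g,a)x=gx+a$. $\Gamma\subset E(n)$ is a discrete, fixed-point-free subgroup. $\Gamma^*$ is the intersection of $\Gamma$ with the identity component of the closure of $\Gamma\cdot\mathbb R^n$ in $E(n)$. By a theorem of Wolf, $\Gamma^*$ is a normal subgroup of $\Gamma$ of finite index. There exist a subspace $V\subset\mathbb R^n$ and a toral subgroup $T\subset O(n)$ such that: - $T$ acts trivially on $V$; - $\Gamma^*\subset T\cdot V$, so every $(h,b)\in\Gamma^*$ has $b\in V$; - $\Gamma^*$ is isomorphic to a discrete uniform subgroup of $V$. Write $\mathbb R^n=V_\perp\oplus V$ orthogonally, and for $a\in\mathbb R^n$ write $a=a_\perp+a_=$ with $a_\perp\in V_\perp$ and $a_=\in V$. Define $\Gamma_1=\{(g,a)\in\Gamma: g|_{V_\perp}=I_{V_\perp}\}$. *)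

theory Defs
  imports "HOL-Analysis.Analysis"
begin

text \<open>Elements of the Euclidean group E(n) are pairs (g,a) with g an orthogonal
  n x n matrix and a a vector; (g,a) acts by x \<mapsto> g x + a.\<close>

type_synonym 'n euc = "(real^'n^'n) \<times> (real^'n)"

definition euc_group :: "'n::finite euc set" where
  "euc_group = {(g, a). orthogonal_matrix g}"

definition euc_mult :: "'n::finite euc \<Rightarrow> 'n euc \<Rightarrow> 'n euc" where
  "euc_mult x y = (fst x ** fst y, fst x *v snd y + snd x)"

definition euc_one :: "'n::finite euc" where
  "euc_one = (mat 1, 0)"

definition euc_inv :: "'n::finite euc \<Rightarrow> 'n euc" where
  "euc_inv x = (transpose (fst x), - (transpose (fst x) *v snd x))"

definition euc_subgroup :: "'n::finite euc set \<Rightarrow> bool" where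
  "euc_subgroup G \<longleftrightarrow> G \<subseteq> euc_group \<and> euc_one \<in> G \<and>
     (\<forall>x\<in>G. \<forall>y\<in>G. euc_mult x y \<in> G) \<and> (\<forall>x\<in>G. euc_inv x \<in> G)"

text \<open>Discrete: every point is isolated (in the topology of matrices x vectors,
  i.e. the subspace topology of E(n)).\<close>
definition discrete_set :: "'a::topological_space set \<Rightarrow> bool" where
  "discrete_set S \<longleftrightarrow> (\<forall>x\<in>S. \<exists>U. open U \<and> x \<in> U \<and> U \<inter> S = {x})"

definition fixed_point_free :: "'n::finite euc set \<Rightarrow> bool" where
  "fixed_point_free G \<longleftrightarrow> (\<forall>x\<in>G. x \<noteq> euc_one \<longrightarrow> (\<forall>p. fst x *v p + snd x \<noteq> p))"

definition Gamma_trans :: "'n::finite euc set \<Rightarrow> 'n euc set" where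
  "Gamma_trans G = {euc_mult x (mat 1, b) | x b. x \<in> G}"

text \<open>\<Gamma>^* = \<Gamma> \<inter> identity component of the closure of \<Gamma>\<cdot>R^n.
  E(n) is closed in the ambient space, so the closure in E(n) is the ambient closure.\<close>
definition Gamma_star :: "'n::finite euc set \<Rightarrow> 'n euc set" where
  "Gamma_star G = G \<inter> connected_component_set (closure (Gamma_trans G)) euc_one"

text \<open>A toral subgroup of O(n): a closed connected commutative subgroup of O(n)
  (i.e. a compact connected abelian Lie subgroup, a torus).\<close>
definition toral_subgroup :: "(real^'n^'n::finite) set \<Rightarrow> bool" where
  "toral_subgroup T \<longleftrightarrow> (\<forall>t\<in>T. orthogonal_matrix t) \<and> mat 1 \<in> T \<and>
     (\<forall>s\<in>T. \<forall>t\<in>T. s ** t \<in> T) \<and> (\<forall>t\<in>T. transpose t \<in> T) \<and>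
     closed T \<and> connected T \<and> (\<forall>s\<in>T. \<forall>t\<in>T. s ** t = t ** s)"

definition perp_space :: "(real^'n::finite) set \<Rightarrow> (real^'n) set" where
  "perp_space V = {x. \<forall>v\<in>V. inner x v = 0}"

definition perp_part :: "(real^'n::finite) set \<Rightarrow> real^'n \<Rightarrow> real^'n" where
  "perp_part V a = (THE p. p \<in> perp_space V \<and> a - p \<in> V)"

end

theory Submission
  imports Defs
begin

text \<open>Write \<Gamma> as finitely many cosets of \<Gamma>* and split (g,a) = f y with f a coset
  representative and y in \<Gamma>*. The conjugate f y f\<inverse> lies in \<Gamma>*, so its translation part
  lies in V, and a differs from it by an orthogonal image of the translation part of f. Hence the
  component of a orthogonal to V is bounded in terms of the finitely many coset representatives.
  If moreover g is the identity on the orthogonal complement of V, then the orthogonal component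
  of the translation part of (g,a)^k is k times that of a, which stays bounded only if it is 0.
  Only normality and finite index of \<Gamma>* and the fact that its translations lie in V are used.\<close>

lemma orthogonal_matrix_inner:
  fixes g :: "real^'n::finite^'n"
  assumes "orthogonal_matrix g"
  shows "(g *v x) \<bullet> (g *v y) = x \<bullet> y"
proof -
  have "orthogonal_transformation ((*v) g)"
    using assms by (simp add: orthogonal_transformation_matrix matrix_of_matrix_vector_mul)
  then show ?thesis by (simp add: orthogonal_transformation_def)
qed

lemma orthogonal_matrix_norm:
  fixes g :: "real^'n::finite^'n"
  assumes "orthogonal_matrix g"
  shows "norm (g *v x) = norm x"
  using orthogonal_matrix_inner[OF assms, of x x] by (simp add: norm_eq_sqrt_inner)

lemma perp_space_eq_orthogonal_comp: "perp_space V = orthogonal_comp V"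
  by (auto simp: perp_space_def orthogonal_comp_def orthogonal_def inner_commute)

lemma perp_part_eqI:
  fixes V :: "(real^'n::finite) set"
  assumes V: "subspace V" and p: "p \<in> perp_space V" and ap: "a - p \<in> V"
  shows "perp_part V a = p"
  unfolding perp_part_def
proof (rule the_equality)
  show "p \<in> perp_space V \<and> a - p \<in> V" using p ap by simp
next
  fix q assume q: "q \<in> perp_space V \<and> a - q \<in> V"
  have "p - q = (a - q) - (a - p)" by simp
  then have "p - q \<in> V" using q ap V by (metis subspace_diff)
  moreover have "p - q \<in> orthogonal_comp V"
    using p q by (simp add: perp_space_eq_orthogonal_comp subspace_diff subspace_orthogonal_comp)
  ultimately have "p - q \<in> V \<inter> orthogonal_comp V" by blast
  then show "q = p" using orthogonal_Int_0[OF V] by simp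
qed

lemma perp_part_in_perp_space_and_diff_in_subspace:
  fixes V :: "(real^'n::finite) set"
  assumes V: "subspace V"
  shows "perp_part V a \<in> perp_space V \<and> a - perp_part V a \<in> V"
proof -
  have "a \<in> V + orthogonal_comp V" using subspace_sum_orthogonal_comp[OF V] by simp
  then obtain v w where "a = v + w" "v \<in> V" "w \<in> orthogonal_comp V"
    using set_plus_elim by blast
  then have "w \<in> perp_space V" "a - w \<in> V" by (auto simp: perp_space_eq_orthogonal_comp)
  then show ?thesis using perp_part_eqI[OF V] by simp
qed

lemma linear_perp_part:
  fixes V :: "(real^'n::finite) set"
  assumes V: "subspace V"
  shows "linear (perp_part V)"
proof -
  note decomp = perp_part_in_perp_space_and_diff_in_subspace[OF V]
  have perp_sub: "subspace (perp_space V)"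
    by (simp add: perp_space_eq_orthogonal_comp subspace_orthogonal_comp)
  show ?thesis
  proof (rule linearI)
    fix x y
    have "x + y - (perp_part V x + perp_part V y) = (x - perp_part V x) + (y - perp_part V y)"
      by simp
    also have "\<dots> \<in> V"
      using decomp[of x] decomp[of y] by (intro subspace_add[OF V]) auto
    finally show "perp_part V (x + y) = perp_part V x + perp_part V y"
      using decomp[of x] decomp[of y] subspace_add[OF perp_sub]
      by (intro perp_part_eqI[OF V]) auto
  next
    fix c and x :: "real^'n"
    have "c *\<^sub>R x - c *\<^sub>R perp_part V x = c *\<^sub>R (x - perp_part V x)"
      by (simp add: scaleR_diff_right)
    also have "\<dots> \<in> V"
      using decomp[of x] by (intro subspace_scale[OF V]) auto
    finally show "perp_part V (c *\<^sub>R x) = c *\<^sub>R perp_part V x"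
      using decomp[of x] subspace_scale[OF perp_sub]
      by (intro perp_part_eqI[OF V]) auto
  qed
qed

lemma perp_part_subspace_eq_0:
  fixes V :: "(real^'n::finite) set"
  assumes V: "subspace V" and "v \<in> V"
  shows "perp_part V v = 0"
  using assms by (intro perp_part_eqI) (auto simp: perp_space_def)

lemma perp_part_add_subspace:
  fixes V :: "(real^'n::finite) set"
  assumes V: "subspace V" and "v \<in> V"
  shows "perp_part V (v + x) = perp_part V x"
  using linear_add[OF linear_perp_part[OF V]] perp_part_subspace_eq_0[OF assms] by simp

lemma norm_perp_part_le:
  fixes V :: "(real^'n::finite) set"
  assumes V: "subspace V"
  shows "norm (perp_part V x) \<le> norm x"
proof -
  let ?p = "perp_part V x"
  have "?p \<in> perp_space V" "x - ?p \<in> V"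
    using perp_part_in_perp_space_and_diff_in_subspace[OF V] by auto
  then have "orthogonal ?p (x - ?p)" unfolding perp_space_def orthogonal_def by blast
  then have "(norm x)\<^sup>2 = (norm ?p)\<^sup>2 + (norm (x - ?p))\<^sup>2"
    using norm_add_Pythagorean[of ?p "x - ?p"] by simp
  then have "(norm ?p)\<^sup>2 \<le> (norm x)\<^sup>2" by simp
  then show ?thesis by (rule power2_le_imp_le) simp
qed

text \<open>V is the orthogonal complement of its orthogonal complement, and g preserves inner products.\<close>
lemma orthogonal_matrix_fixing_perp_space_maps_subspace:
  fixes V :: "(real^'n::finite) set" and g :: "real^'n^'n"
  assumes V: "subspace V" and g: "orthogonal_matrix g"
    and fix_perp: "\<forall>x\<in>perp_space V. g *v x = x" and v: "v \<in> V"
  shows "g *v v \<in> V"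
proof -
  have "orthogonal u (g *v v)" if u: "u \<in> orthogonal_comp V" for u
  proof -
    have "u \<bullet> (g *v v) = (g *v u) \<bullet> (g *v v)"
      using fix_perp u by (simp add: perp_space_eq_orthogonal_comp)
    also have "\<dots> = u \<bullet> v" using orthogonal_matrix_inner[OF g] by simp
    also have "\<dots> = 0"
      using u v by (simp add: orthogonal_comp_def orthogonal_def inner_commute[of u])
    finally show ?thesis by (simp add: orthogonal_def)
  qed
  then have "g *v v \<in> orthogonal_comp (orthogonal_comp V)"
    by (simp add: orthogonal_comp_def)
  then show ?thesis using orthogonal_comp_self[OF V] by simp
qed

lemma perp_part_matrix_vector_mult:
  fixes V :: "(real^'n::finite) set" and g :: "real^'n^'n"
  assumes V: "subspace V" and g: "orthogonal_matrix g"
    and fix_perp: "\<forall>x\<in>perp_space V. g *v x = x"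
  shows "perp_part V (g *v z) = perp_part V z"
proof (rule perp_part_eqI[OF V])
  note decomp = perp_part_in_perp_space_and_diff_in_subspace[OF V, of z]
  then show "perp_part V z \<in> perp_space V" ..
  have "g *v z - perp_part V z = g *v (z - perp_part V z)"
    using decomp fix_perp by (simp add: matrix_vector_mult_diff_distrib)
  also have "\<dots> \<in> V"
    using decomp by (intro orthogonal_matrix_fixing_perp_space_maps_subspace[OF V g fix_perp]) simp
  finally show "g *v z - perp_part V z \<in> V" .
qed

lemma snd_euc_mult_conj_decomp:
  "snd (euc_mult x y) =
     snd (euc_mult (euc_mult x y) (euc_inv x)) + fst (euc_mult x y) *v (transpose (fst x) *v snd x)"
proof -
  have "fst (euc_mult x y) *v (- (transpose (fst x) *v snd x))
        = - (fst (euc_mult x y) *v (transpose (fst x) *v snd x))"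
    by (simp add: vec_eq_iff matrix_vector_mult_def sum_negf)
  then show ?thesis by (simp add: euc_mult_def euc_inv_def)
qed

lemma norm_perp_part_euc_mult_le:
  fixes V :: "(real^'n::finite) set"
  assumes V: "subspace V"
    and orth: "orthogonal_matrix (fst x)" "orthogonal_matrix (fst (euc_mult x y))"
    and conj: "snd (euc_mult (euc_mult x y) (euc_inv x)) \<in> V"
  shows "norm (perp_part V (snd (euc_mult x y))) \<le> norm (snd x)"
proof -
  let ?w = "fst (euc_mult x y) *v (transpose (fst x) *v snd x)"
  have "norm (perp_part V (snd (euc_mult x y))) = norm (perp_part V ?w)"
    using snd_euc_mult_conj_decomp perp_part_add_subspace[OF V conj] by metis
  also have "\<dots> \<le> norm ?w" by (rule norm_perp_part_le[OF V])
  also have "\<dots> = norm (transpose (fst x) *v snd x)"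
    by (rule orthogonal_matrix_norm[OF orth(2)])
  also have "\<dots> = norm (snd x)"
    using orth(1) by (intro orthogonal_matrix_norm) simp
  finally show ?thesis .
qed

lemma euc_subgroup_power_mem:
  assumes "euc_subgroup G" and "x \<in> G"
  shows "(euc_mult x ^^ k) euc_one \<in> G"
  using assms by (induction k) (auto simp: euc_subgroup_def)

lemma perp_part_snd_euc_power:
  fixes V :: "(real^'n::finite) set" and g :: "real^'n^'n"
  assumes V: "subspace V" and g: "orthogonal_matrix g"
    and fix_perp: "\<forall>x\<in>perp_space V. g *v x = x"
  shows "perp_part V (snd ((euc_mult (g, a) ^^ k) euc_one)) = real k *\<^sub>R perp_part V a"
proof (induction k)
  case 0
  then show ?case using linear_0[OF linear_perp_part[OF V]] by (simp add: euc_one_def)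
next
  case (Suc k)
  have "snd ((euc_mult (g, a) ^^ Suc k) euc_one) = g *v snd ((euc_mult (g, a) ^^ k) euc_one) + a"
    by (simp add: euc_mult_def)
  then show ?case
    using Suc linear_add[OF linear_perp_part[OF V]] perp_part_matrix_vector_mult[OF V g fix_perp]
    by (simp add: algebra_simps)
qed

lemma perp_part_eq_0_if_bounded:
  fixes G :: "'n::finite euc set" and V :: "(real^'n) set"
  assumes G: "euc_subgroup G" and V: "subspace V"
    and bounded: "\<forall>(g, a)\<in>G. norm (perp_part V a) \<le> C"
    and ga: "(g, a) \<in> G" and fix_perp: "\<forall>x\<in>perp_space V. g *v x = x"
  shows "perp_part V a = 0"
proof (rule ccontr)
  assume "perp_part V a \<noteq> 0"
  then have pos: "norm (perp_part V a) > 0" by simp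
  have g: "orthogonal_matrix g" using G ga by (auto simp: euc_subgroup_def euc_group_def)
  obtain k :: nat where "real k > C / norm (perp_part V a)" using reals_Archimedean2 by blast
  then have "norm (perp_part V (snd ((euc_mult (g, a) ^^ k) euc_one))) > C"
    using pos perp_part_snd_euc_power[OF V g fix_perp] by (simp add: field_simps)
  moreover have "(euc_mult (g, a) ^^ k) euc_one \<in> G"
    by (rule euc_subgroup_power_mem[OF G ga])
  ultimately show False using bounded by fastforce
qed

theorem lemma3p2:
  fixes \<Gamma> :: "'n::finite euc set" and V :: "(real^'n) set" and T :: "(real^'n^'n) set"
  assumes sub: "euc_subgroup \<Gamma>"
    and disc: "discrete_set \<Gamma>"
    and fpf: "fixed_point_free \<Gamma>"
    and normal: "\<forall>x\<in>\<Gamma>. \<forall>y\<in>Gamma_star \<Gamma>. euc_mult (euc_mult x y) (euc_inv x) \<in> Gamma_star \<Gamma>"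
    and fin_index: "\<exists>F. finite F \<and> F \<subseteq> \<Gamma> \<and> \<Gamma> = (\<Union>f\<in>F. euc_mult f ` Gamma_star \<Gamma>)"
    and V: "subspace V"
    and T: "toral_subgroup T"
    and T_triv: "\<forall>t\<in>T. \<forall>v\<in>V. t *v v = v"
    and star_TV: "\<forall>y\<in>Gamma_star \<Gamma>. fst y \<in> T \<and> snd y \<in> V"
    and star_inj: "inj_on snd (Gamma_star \<Gamma>)"
    and lat_disc: "discrete_set (snd ` Gamma_star \<Gamma>)"
    and lat_unif: "\<exists>K. compact K \<and> V \<subseteq> {l + k | l k. l \<in> snd ` Gamma_star \<Gamma> \<and> k \<in> K}"
  shows "(\<exists>C. \<forall>(g, a)\<in>\<Gamma>. norm (perp_part V a) \<le> C) \<and>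
         (\<forall>(g, a)\<in>\<Gamma>. (\<forall>x\<in>perp_space V. g *v x = x) \<longrightarrow> perp_part V a = 0)"
proof -
  obtain F where F: "finite F" "F \<subseteq> \<Gamma>" "\<Gamma> = (\<Union>f\<in>F. euc_mult f ` Gamma_star \<Gamma>)"
    using fin_index by blast
  have orth: "orthogonal_matrix (fst x)" if "x \<in> \<Gamma>" for x
    using sub that by (auto simp: euc_subgroup_def euc_group_def)
  let ?C = "\<Sum>f\<in>F. norm (snd f)"
  have bounded: "\<forall>(g, a)\<in>\<Gamma>. norm (perp_part V a) \<le> ?C"
  proof (clarify)
    fix g a assume ga: "(g, a) \<in> \<Gamma>"
    then obtain f y where f: "f \<in> F" and y: "y \<in> Gamma_star \<Gamma>" and fy: "(g, a) = euc_mult f y"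
      using F(3) by blast
    have "f \<in> \<Gamma>" using f F(2) by blast
    then have "euc_mult (euc_mult f y) (euc_inv f) \<in> Gamma_star \<Gamma>" using normal y by blast
    then have "norm (perp_part V (snd (euc_mult f y))) \<le> norm (snd f)"
      using \<open>f \<in> \<Gamma>\<close> ga star_TV
      by (intro norm_perp_part_euc_mult_le[OF V] orth) (simp_all flip: fy)
    also have "\<dots> \<le> ?C" using f F(1) by (intro member_le_sum) auto
    finally show "norm (perp_part V a) \<le> ?C" by (simp flip: fy)
  qed
  then show ?thesis using perp_part_eq_0_if_bounded[OF sub V] by blast
qed

end
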